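(* Let $N\ge M\ge 1$. Let $H:\mathbb{R}^N\times\mathbb{R}^N\to\mathbb{R}$ be continuous, $\mathbb{Z}^N$-periodic in its first variable, with $H(y,0)\ge 0$ for all $y$. Let $\beta$ and $a$ be as in the context, and let $dq_0$ be a positive Radon measure on $\mathbb{R}^M$ satisfying condition (B) and $$\int_{|z|<1}|z|^{\gamma}\,dq_0(z)+\int_{|z|\ge 1}|z|^{\gamma-1}\,dq_0(z)<\infty,$$ with $\gamma=2$ in case (I) and $\gamma=1$ in case (II), where (I) $\;H(y,\nabla u)-a(y)\int_{\mathbb{R}^M}[u(y+\beta(z))-u(y)-\langle\nabla u(y),\beta(z)\rangle]\,dq_0(z)=0$ in $\mathbb{T}^N$, (II) $\;H(y,\nabla u)-a(y)\int_{\mathbb{R}^M}[u(y+\beta(z))-u(y)]\,dq_0(z)=0$ in $\mathbb{T}^N$. Let $u$ be an upper semicontinuous, $\mathbb{Z}^N$-periodic viscosity subsolution of (I) (resp. of (II)). If $u$ attains its maximum over $\mathbb{T}^N$ at some point $\bar y$, then $u$ is constant on $\mathbb{T}^N$.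
   Context: $\mathbb{T}^N=[0,1]^N$ is the unit torus; functions on $\mathbb{T}^N$ are identified with $\mathbb{Z}^N$-periodic functions on $\mathbb{R}^N$. $\beta:\mathbb{R}^M\to\mathbb{R}^N$ is continuous with $\beta(cz)=c\beta(z)$ for all $c>0$ and $|\beta(z)|\le B_1|z|$ for all $z$, for some constant $B_1>0$. $a:\mathbb{R}^N\to\mathbb{R}$ is continuous, $\mathbb{Z}^N$-periodic, with $a\ge a_0>0$ and $|a(y)-a(y')|\le L|y-y'|^{\theta_1}$ for some constants $a_0>0$, $L>0$, $\theta_1\in(0,1]$. Condition (B): let $S_0=\mathrm{supp}(dq_0)$. For any two points $y,y'\in\mathbb{T}^N$ there exist finitely many points $y_1,\dots,y_m\in\mathbb{T}^N$ with $y_1=y$, $y_m=y'$, such that for any positive numbers $\varepsilon_i>0$ ($1\le i\le m$) there exist subsets $J_i\subset S_0$ ($1\le i\le m-1$) with $y_i+\beta(z)\in B_{\varepsilon_i}(y_{i+1})$ (modulo $\mathbb{Z}^N$) for all $z\in J_i$ and $\int_{J_i}1\,dq_0(z)>0$. Viscosity subsolution: an upper semicontinuous periodic $u$ is a viscosity subsolution of (I) if for every $\hat y$ and every $\phi\in C^2(\mathbb{R}^N)$ such that $u-\phi$ attains a global maximum at $\hat y$ and $u(\hat y)=\phi(\hat y)$, the function $z\mapsto u(\hat y+\beta(z))-u(\hat y)-\langle\nabla\phi(\hat y),\beta(z)\rangle$ is $dq_0$-integrable and $H(\hat y,\nabla\phi(\hat y))-a(\hat y)\int_{\mathbb{R}^M}[u(\hat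 y+\beta(z))-u(\hat y)-\langle\nabla\phi(\hat y),\beta(z)\rangle]\,dq_0(z)\le 0$. For (II) the same with the term $\langle\nabla\phi(\hat y),\beta(z)\rangle$ removed from the integrand. *)

theory Defs
  imports "HOL-Analysis.Analysis"
begin

definition int_vec :: "real^'n \<Rightarrow> bool" where
  "int_vec k \<longleftrightarrow> (\<forall>i. k $ i \<in> \<int>)"

definition zperiodic :: "(real^'n \<Rightarrow> 'b) \<Rightarrow> bool" where
  "zperiodic f \<longleftrightarrow> (\<forall>y k. int_vec k \<longrightarrow> f (y + k) = f y)"

text \<open>The unit torus, identified with the fundamental cell [0,1]^N.\<close>
definition torus :: "(real^'n) set" where
  "torus = cbox 0 1"

definition usc :: "(real^'n \<Rightarrow> real) \<Rightarrow> bool" where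
  "usc f \<longleftrightarrow> (\<forall>x. \<forall>e>0. eventually (\<lambda>y. f y < f x + e) (at x))"

definition C2 :: "(real^'n \<Rightarrow> real) \<Rightarrow> bool" where
  "C2 \<phi> \<longleftrightarrow> (\<exists>(Df :: real^'n \<Rightarrow> ((real^'n) \<Rightarrow>\<^sub>L real))
                 (D2 :: real^'n \<Rightarrow> ((real^'n) \<Rightarrow>\<^sub>L ((real^'n) \<Rightarrow>\<^sub>L real))).
      (\<forall>x. (\<phi> has_derivative blinfun_apply (Df x)) (at x)) \<and>
      (\<forall>x. (Df has_derivative blinfun_apply (D2 x)) (at x)) \<and>
      continuous_on UNIV D2)"

definition grad :: "(real^'n \<Rightarrow> real) \<Rightarrow> real^'n \<Rightarrow> real^'n" where
  "grad \<phi> x = (\<chi> i. frechet_derivative \<phi> (at x) (axis i 1))"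

definition msupp :: "'a::topological_space measure \<Rightarrow> 'a set" where
  "msupp q = {z. \<forall>U. open U \<longrightarrow> z \<in> U \<longrightarrow> emeasure q U > 0}"

definition radon_measure :: "'a::euclidean_space measure \<Rightarrow> bool" where
  "radon_measure q \<longleftrightarrow> sets q = sets borel \<and> (\<forall>K. compact K \<longrightarrow> emeasure q K < \<infinity>)"

definition moment_cond :: "'a::euclidean_space measure \<Rightarrow> nat \<Rightarrow> bool" where
  "moment_cond q \<gamma> \<longleftrightarrow>
     (\<integral>\<^sup>+ z. indicator {z. norm z < 1} z * ennreal (norm z ^ \<gamma>) \<partial>q)
   + (\<integral>\<^sup>+ z. indicator {z. norm z \<ge> 1} z * ennreal (norm z ^ (\<gamma> - 1)) \<partial>q) < \<infinity>"

definition condB :: "(real^'m \<Rightarrow> real^'n) \<Rightarrow> (real^'m) measure \<Rightarrow> bool" where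
  "condB \<beta> q \<longleftrightarrow>
    (\<forall>y\<in>torus. \<forall>y'\<in>torus. \<exists>m::nat. \<exists>ys::nat \<Rightarrow> real^'n.
       1 \<le> m \<and> (\<forall>i\<in>{1..m}. ys i \<in> torus) \<and> ys 1 = y \<and> ys m = y' \<and>
       (\<forall>\<epsilon>::nat \<Rightarrow> real. (\<forall>i\<in>{1..m}. \<epsilon> i > 0) \<longrightarrow>
          (\<exists>J::nat \<Rightarrow> (real^'m) set. \<forall>i\<in>{1..<m}.
              J i \<subseteq> msupp q \<and> J i \<in> sets q \<and>
              (\<forall>z\<in>J i. \<exists>k. int_vec k \<and> dist (ys i + \<beta> z + k) (ys (Suc i)) < \<epsilon> i) \<and>
              emeasure q (J i) > 0)))"

text \<open>Viscosity subsolution of (I) (with_grad = True) or of (II) (with_grad = False).\<close>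
definition visc_subsol ::
  "bool \<Rightarrow> (real^'n \<Rightarrow> real^'n \<Rightarrow> real) \<Rightarrow> (real^'n \<Rightarrow> real) \<Rightarrow> (real^'m \<Rightarrow> real^'n)
   \<Rightarrow> (real^'m) measure \<Rightarrow> (real^'n \<Rightarrow> real) \<Rightarrow> bool" where
  "visc_subsol with_grad H a \<beta> q u \<longleftrightarrow> usc u \<and> zperiodic u \<and>
    (\<forall>yh \<phi>. C2 \<phi> \<and> (\<forall>y. u y - \<phi> y \<le> u yh - \<phi> yh) \<and> u yh = \<phi> yh \<longrightarrow>
       (let g = (\<lambda>z. u (yh + \<beta> z) - u yh -
                       (if with_grad then grad \<phi> yh \<bullet> \<beta> z else 0))
        in integrable q g \<and>
           H yh (grad \<phi> yh) - a yh * (\<integral>z. g z \<partial>q) \<le> 0))"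

end

theory Submission
  imports Defs
begin

text \<open>Testing the subsolution inequality at a global maximum point with a constant function
  makes the gradient vanish, so \<open>H(y,0) \<ge> 0\<close> and \<open>a > 0\<close> force the (nonpositive) integral of
  \<open>u(y + \<beta>(z)) - max u\<close> to be nonnegative; hence \<open>u(y + \<beta>(z)) = max u\<close> for \<open>dq\<^sub>0\<close>-almost every
  \<open>z\<close>. Condition (B) supplies, along a chain from \<open>y\<close> to any \<open>y'\<close>, sets of positive measure whose
  translates \<open>y\<^sub>i + \<beta>(z)\<close> accumulate at \<open>y\<^sub>i\<^sub>+\<^sub>1\<close> modulo \<open>\<int>\<^sup>N\<close>, and upper semicontinuity carries the
  maximum to \<open>y\<^sub>i\<^sub>+\<^sub>1\<close>. Only \<open>H(y,0) \<ge> 0\<close>, \<open>a > 0\<close> and condition (B) enter; the regularity and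
  moment hypotheses merely make the notion of subsolution meaningful.\<close>

lemma grad_const [simp]: "grad (\<lambda>x. c) y = 0"
  unfolding grad_def by (simp add: vec_eq_iff)

lemma C2_const: "C2 (\<lambda>x::real^'n. c)"
  unfolding C2_def
  by (rule exI[of _ "\<lambda>_. 0"], rule exI[of _ "\<lambda>_. 0"]) (auto simp: zero_blinfun.rep_eq)

lemma usc_ge_if_approximable:
  fixes u :: "real^'n \<Rightarrow> real"
  assumes "usc u" and "\<forall>e>0. \<exists>x. dist x y < e \<and> u x \<ge> M"
  shows "u y \<ge> M"
proof (rule ccontr)
  assume "\<not> u y \<ge> M"
  hence "M - u y > 0" by simp
  with assms(1) have "eventually (\<lambda>x. u x < u y + (M - u y)) (at y)"
    unfolding usc_def by blast
  then obtain d where "d > 0" and d: "\<And>x. x \<noteq> y \<Longrightarrow> dist x y < d \<Longrightarrow> u x < M"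
    unfolding eventually_at by auto
  with assms(2) obtain x where "dist x y < d" "u x \<ge> M" by blast
  with d[of x] \<open>\<not> u y \<ge> M\<close> show False by (cases "x = y") auto
qed

lemma AE_ex_in_positive_set:
  assumes "AE z in q. P z" and "J \<in> sets q" and "emeasure q J > 0"
  shows "\<exists>z\<in>J. P z"
proof (rule ccontr)
  assume "\<not> ?thesis"
  from assms(1) obtain N where N: "{x \<in> space q. \<not> P x} \<subseteq> N" "emeasure q N = 0" "N \<in> sets q"
    by (rule AE_E)
  have "J \<subseteq> N" using N(1) sets.sets_into_space[OF assms(2)] \<open>\<not> (\<exists>z\<in>J. P z)\<close> by blast
  hence "emeasure q J \<le> emeasure q N" using N(3) by (rule emeasure_mono)
  with N(2) assms(3) show False by simp
qed

lemma zperiodic_le_if_le_on_torus: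
  fixes u :: "real^'n \<Rightarrow> real"
  assumes "zperiodic u" and "\<forall>y\<in>torus. u y \<le> M"
  shows "u x \<le> M"
proof -
  define k :: "real^'n" where "k = (\<chi> i. - of_int \<lfloor>x $ i\<rfloor>)"
  have k: "int_vec k" unfolding int_vec_def k_def by (simp add: Ints_minus)
  have "x + k \<in> torus" unfolding torus_def mem_box_cart k_def
    by (auto simp: of_int_floor_le) (smt (verit) real_of_int_floor_add_one_gt)
  hence "u (x + k) \<le> M" using assms(2) by blast
  thus ?thesis using assms(1) k unfolding zperiodic_def by simp
qed

lemma visc_subsol_AE_max_at_max:
  assumes sub: "visc_subsol wg H a \<beta> q u"
    and H0: "H y 0 \<ge> 0" and ay: "a y > 0"
    and max: "\<And>x. u x \<le> u y"
  shows "AE z in q. u (y + \<beta> z) = u y"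
proof -
  define g where "g z = u (y + \<beta> z) - u y" for z
  have "integrable q g \<and> H y 0 - a y * (\<integral>z. g z \<partial>q) \<le> 0"
    using sub max unfolding visc_subsol_def g_def Let_def
    by (elim conjE allE[of _ y] allE[of _ "\<lambda>x. u y"] impE) (auto simp: C2_const cong: if_cong)
  hence g_int: "integrable q g" and ineq: "H y 0 - a y * (\<integral>z. g z \<partial>q) \<le> 0" by auto
  have g_nonpos: "\<And>z. g z \<le> 0" unfolding g_def using max by simp
  have "a y * (\<integral>z. g z \<partial>q) \<ge> 0" using ineq H0 by linarith
  hence "(\<integral>z. g z \<partial>q) \<ge> 0" using ay by (simp add: zero_le_mult_iff)
  moreover have "(\<integral>z. - g z \<partial>q) \<ge> 0"
    by (rule integral_nonneg_AE) (use g_nonpos in auto)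
  ultimately have "(\<integral>z. - g z \<partial>q) = 0" by simp
  hence "AE z in q. - g z = 0"
    using integral_nonneg_eq_0_iff_AE[of q "\<lambda>z. - g z"] g_int g_nonpos by simp
  thus ?thesis unfolding g_def by (rule AE_mp) (auto intro: AE_I2)
qed

lemma max_spreads_along_condB_link:
  fixes u :: "real^'n \<Rightarrow> real" and \<beta> :: "real^'m \<Rightarrow> real^'n"
  assumes "usc u" and per: "zperiodic u" and max: "\<And>x. u x \<le> M"
    and AE_max: "AE z in q. u (y + \<beta> z) = M"
    and link: "\<And>e. e > 0 \<Longrightarrow> \<exists>J\<in>sets q. emeasure q J > 0 \<and>
                 (\<forall>z\<in>J. \<exists>k. int_vec k \<and> dist (y + \<beta> z + k) y' < e)"
  shows "u y' = M"
proof (rule antisym[OF max usc_ge_if_approximable[OF \<open>usc u\<close>]], intro allI impI)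
  fix e :: real assume "e > 0"
  then obtain J where J: "J \<in> sets q" "emeasure q J > 0"
    and close: "\<forall>z\<in>J. \<exists>k. int_vec k \<and> dist (y + \<beta> z + k) y' < e"
    using link by blast
  obtain z where "z \<in> J" and z: "u (y + \<beta> z) = M"
    using AE_ex_in_positive_set[OF AE_max J] by blast
  then obtain k where k: "int_vec k" "dist (y + \<beta> z + k) y' < e" using close by blast
  have "u (y + \<beta> z + k) = M" using per k(1) z unfolding zperiodic_def by simp
  with k(2) show "\<exists>x. dist x y' < e \<and> u x \<ge> M" by auto
qed

theorem theorem2p1:
  fixes H :: "real^'n \<Rightarrow> real^'n \<Rightarrow> real"
    and \<beta> :: "real^'m \<Rightarrow> real^'n"
    and a :: "real^'n \<Rightarrow> real"
    and q :: "(real^'m) measure"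
    and u :: "real^'n \<Rightarrow> real"
    and B1 a0 L \<theta>1 :: real
    and ybar :: "real^'n"
  assumes NM: "CARD('m) \<le> CARD('n)"
    and H_cont: "continuous_on UNIV (\<lambda>(y, p). H y p)"
    and H_per: "\<forall>p. zperiodic (\<lambda>y. H y p)"
    and H_0: "\<forall>y. H y 0 \<ge> 0"
    and beta_cont: "continuous_on UNIV \<beta>"
    and beta_hom: "\<forall>c z. c > 0 \<longrightarrow> \<beta> (c *\<^sub>R z) = c *\<^sub>R \<beta> z"
    and B1: "B1 > 0" "\<forall>z. norm (\<beta> z) \<le> B1 * norm z"
    and a_cont: "continuous_on UNIV a"
    and a_per: "zperiodic a"
    and a0: "a0 > 0" "\<forall>y. a y \<ge> a0"
    and a_hoelder: "L > 0" "0 < \<theta>1" "\<theta>1 \<le> 1"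
        "\<forall>y y'. \<bar>a y - a y'\<bar> \<le> L * norm (y - y') powr \<theta>1"
    and q_radon: "radon_measure q"
    and q_B: "condB \<beta> q"
    and cases: "(moment_cond q 2 \<and> visc_subsol True H a \<beta> q u)
              \<or> (moment_cond q 1 \<and> visc_subsol False H a \<beta> q u)"
    and ybar: "ybar \<in> torus" "\<forall>y\<in>torus. u y \<le> u ybar"
  shows "\<forall>y\<in>torus. u y = u ybar"
proof
  fix y' :: "real^'n" assume "y' \<in> torus"
  obtain wg where sub: "visc_subsol wg H a \<beta> q u" using cases by blast
  hence "usc u" and per: "zperiodic u" unfolding visc_subsol_def by auto
  have max: "\<And>x. u x \<le> u ybar" using zperiodic_le_if_le_on_torus[OF per ybar(2)] .
  have a_pos: "\<And>y. a y > 0" using a0 by (meson less_le_trans)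
  obtain m ys where "1 \<le> m" "ys 1 = ybar" "ys m = y'" and links:
    "\<And>\<epsilon>. \<forall>i\<in>{1..m}. \<epsilon> i > 0 \<Longrightarrow> \<exists>J. \<forall>i\<in>{1..<m}. J i \<subseteq> msupp q \<and> J i \<in> sets q \<and>
       (\<forall>z\<in>J i. \<exists>k. int_vec k \<and> dist (ys i + \<beta> z + k) (ys (Suc i)) < \<epsilon> i) \<and> emeasure q (J i) > 0"
    using q_B[unfolded condB_def, rule_format, OF ybar(1) \<open>y' \<in> torus\<close>] by blast
  have "u (ys m) = u ybar"
    using \<open>1 \<le> m\<close>
  proof (induction m rule: dec_induct)
    case base show ?case using \<open>ys 1 = ybar\<close> by simp
  next
    case (step i)
    show ?case
    proof (rule max_spreads_along_condB_link[OF \<open>usc u\<close> per max])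
      show "AE z in q. u (ys i + \<beta> z) = u ybar"
        using visc_subsol_AE_max_at_max[OF sub H_0[rule_format] a_pos, of "ys i"] max step.IH
        by simp
      show "\<exists>J\<in>sets q. emeasure q J > 0 \<and>
              (\<forall>z\<in>J. \<exists>k. int_vec k \<and> dist (ys i + \<beta> z + k) (ys (Suc i)) < e)" if "e > 0" for e
        using links[of "\<lambda>_. e"] that step.hyps by force
    qed
  qed
  with \<open>ys m = y'\<close> show "u y' = u ybar" by simp
qed

end
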